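(* Let $\lambda>\frac16$. Then $\mu_\lambda$ is doubling: there exists $C_\lambda\ge1$ such that for every $x\in[0,1]$ and every $r>0$, $\mu_\lambda(B(x,2r))\le C_\lambda\,\mu_\lambda(B(x,r))$.
   Context: For $\lambda>\frac16$, $\gamma_\lambda$ is the unique real number $\ge1$ with $2\cdot3^{-\gamma_\lambda}+(6\lambda+1)6^{-\gamma_\lambda}+(6\lambda-1)6^{-\gamma_\lambda}=1$; $p_0=p_3=3^{-\gamma_\lambda}$, $p_1=(6\lambda+1)6^{-\gamma_\lambda}$, $p_2=(6\lambda-1)6^{-\gamma_\lambda}$; $S_0(x)=x/3$, $S_1(x)=x/6+1/3$, $S_2(x)=-x/6+2/3$, $S_3(x)=x/3+2/3$; $\mu_\lambda$ is the unique Borel probability measure on $[0,1]$ with $\mu_\lambda=\sum_{i=0}^3p_i\,\mu_\lambda\circ S_i^{-1}$. $B(x,r)$ is the open ball (interval) of center $x$ and radius $r$. *)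

theory Defs
  imports "HOL-Probability.Probability"
begin

definition gamma_lam :: "real \<Rightarrow> real" where
  "gamma_lam lam = (THE g. g \<ge> 1 \<and>
     2 * 3 powr (-g) + (6*lam+1) * 6 powr (-g) + (6*lam-1) * 6 powr (-g) = 1)"

definition pw :: "real \<Rightarrow> nat \<Rightarrow> real" where
  "pw lam i = (if i = 0 \<or> i = 3 then 3 powr (- gamma_lam lam)
               else if i = 1 then (6*lam+1) * 6 powr (- gamma_lam lam)
               else (6*lam-1) * 6 powr (- gamma_lam lam))"

definition Smap :: "nat \<Rightarrow> real \<Rightarrow> real" where
  "Smap i x = (if i = 0 then x/3
               else if i = 1 then x/6 + 1/3
               else if i = 2 then - x/6 + 2/3
               else x/3 + 2/3)"

definition is_mu_lambda :: "real \<Rightarrow> real measure \<Rightarrow> bool" where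
  "is_mu_lambda lam M \<longleftrightarrow>
     sets M = sets borel \<and> prob_space M \<and> emeasure M (- {0..1}) = 0 \<and>
     (\<forall>A\<in>sets borel. emeasure M A =
        (\<Sum>i<4. ennreal (pw lam i) * emeasure M (Smap i -` A)))"

end

(* A Borel set that meets [0,1] only inside one cylinder S_k[0,1] has p_k times the mass of its
   S_k-preimage, because distinct cylinders overlap only in images of the endpoints 0 and 1, which
   carry no mass.  So a ball whose double avoids the junctions 1/3, 1/2, 2/3 has the same doubling
   ratio as its preimage, a ball at least three times larger, and induction over scales leaves
   balls of radius at least 1/24 (handled by full support and compactness of [0,1]) and balls
   close to a junction.  Near a junction everything is governed by the endpoint masses
   mu[0,t] and mu[1-t,1].  Both get multiplied by p_0 when t is divided by 3, so they are
   comparable with each other and change by a bounded factor when t is tripled: this bounds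
   mu(B(x,2r)) above by a multiple of mu[0,r], and comparing mu[0,t] with the mass of the window
   (2t/3,t) bounds mu(B(x,r)) below by a multiple of mu[0,r]. *)

theory Submission
  imports Defs
begin

lemma scale_induct:
  fixes P :: "real \<Rightarrow> bool"
  assumes "q > 1" "a > 0"
    and large: "\<And>t. t \<ge> a \<Longrightarrow> P t"
    and step: "\<And>t. 0 < t \<Longrightarrow> t < a \<Longrightarrow> (\<And>s. s \<ge> q * t \<Longrightarrow> P s) \<Longrightarrow> P t"
    and "t > 0"
  shows "P t"
proof -
  have "P s" if "s \<ge> a / q ^ n" for n s
    using that
  proof (induction n arbitrary: s)
    case 0
    then show ?case using large by simp
  next
    case (Suc n)
    show ?case
    proof (cases "s \<ge> a")
      case False
      have "0 < a / q ^ Suc n" using assms by simp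
      then have "0 < s" using Suc.prems by linarith
      moreover have "a / q ^ n \<le> q * s"
        using Suc.prems \<open>q > 1\<close> by (simp add: field_simps)
      ultimately show ?thesis using False Suc.IH step[of s] by simp
    qed (use large in auto)
  qed
  moreover obtain n where "(1 / q) ^ n < t / a"
    using real_arch_pow_inv[of "t / a" "1 / q"] assms by auto
  then have "a / q ^ n \<le> t" using assms by (simp add: field_simps power_divide)
  ultimately show ?thesis by blast
qed

lemma scale_invariant_comparison:
  fixes f g :: "real \<Rightarrow> real"
  assumes "q \<ge> 0"
    and f_scale: "\<And>t. 0 < t \<Longrightarrow> t < 1/3 \<Longrightarrow> f t = q * f (3 * t)"
    and g_scale: "\<And>t. 0 < t \<Longrightarrow> t < 1/3 \<Longrightarrow> g t = q * g (3 * t)"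
    and top: "\<And>t. 1/3 \<le> t \<Longrightarrow> t \<le> 1 \<Longrightarrow> c * g t \<le> f t"
    and "0 < t" "t \<le> 1"
  shows "c * g t \<le> f t"
proof -
  have "t \<le> 1 \<longrightarrow> c * g t \<le> f t"
  proof (rule scale_induct[where P = "\<lambda>t. t \<le> 1 \<longrightarrow> c * g t \<le> f t" and q = 3 and a = "1/3"])
    fix s :: real
    assume s: "0 < s" "s < 1/3" and IH: "\<And>u. u \<ge> 3 * s \<Longrightarrow> u \<le> 1 \<longrightarrow> c * g u \<le> f u"
    have "c * g s = q * (c * g (3 * s))" using g_scale s by simp
    also have "\<dots> \<le> q * f (3 * s)" using IH[of "3 * s"] s \<open>q \<ge> 0\<close> by (simp add: mult_left_mono)
    also have "\<dots> = f s" using f_scale s by simp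
    finally show "s \<le> 1 \<longrightarrow> c * g s \<le> f s" by blast
  qed (use top assms in auto)
  then show ?thesis using \<open>t \<le> 1\<close> by blast
qed

locale scaling_function =
  fixes F :: "real \<Rightarrow> real" and q :: real
  assumes mono: "mono F" and le_1: "F t \<le> 1" and at_1: "F 1 = 1" and q_pos: "q > 0"
    and scale: "0 \<le> t \<Longrightarrow> t \<le> 1 \<Longrightarrow> F (t / 3) = q * F t"
begin

lemma at_third: "F (1/3) = q"
  using scale[of 1] at_1 by simp

lemma growth_step:
  assumes "0 \<le> t" shows "q * F (3 * t) \<le> F t"
proof (cases "t \<le> 1/3")
  case True
  then show ?thesis using scale[of "3 * t"] assms by simp
next
  case False
  have "q * F (3 * t) \<le> q" using le_1 q_pos by (simp add: mult_left_le)
  also have "\<dots> = F (1/3)" by (simp add: at_third)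
  also have "\<dots> \<le> F t" using False mono by (simp add: monoD)
  finally show ?thesis .
qed

lemma growth:
  assumes "0 \<le> t" shows "q ^ n * F (3 ^ n * t) \<le> F t"
proof (induction n)
  case (Suc n)
  have "q ^ Suc n * F (3 ^ Suc n * t) = q ^ n * (q * F (3 * (3 ^ n * t)))"
    by (simp add: mult.assoc)
  also have "\<dots> \<le> q ^ n * F (3 ^ n * t)"
    using growth_step[of "3 ^ n * t"] assms q_pos by (simp add: mult_left_mono)
  finally show ?case using Suc.IH by linarith
qed simp

lemma pos:
  assumes "0 < t" shows "0 < F t"
proof -
  have at_power: "F (1 / 3 ^ n) = q ^ n" for n
  proof (induction n)
    case (Suc n)
    have "F (1 / 3 ^ Suc n) = F ((1 / 3 ^ n) / 3)" by (simp add: mult.commute)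
    also have "\<dots> = q * F (1 / 3 ^ n)" by (rule scale) simp_all
    finally show ?case using Suc.IH by simp
  qed (simp add: at_1)
  obtain n where "(1 / 3) ^ n < t"
    using real_arch_pow_inv[of t "1 / 3"] assms by auto
  then have "q ^ n \<le> F t"
    using at_power[of n] mono by (metis less_imp_le monoD power_one_over)
  moreover have "0 < q ^ n" using q_pos by simp
  ultimately show ?thesis by linarith
qed

end

definition cylinder :: "nat \<Rightarrow> real set" where
  "cylinder k = Smap k ` {0..1}"

definition contraction_ratio :: "nat \<Rightarrow> real" where
  "contraction_ratio k = (if k = 1 \<or> k = 2 then 1/6 else 1/3)"

definition junctions :: "real set" where
  "junctions = {1/3, 1/2, 2/3}"

lemma cylinder_eq:
  "cylinder k = (if k = 0 then {0..1/3} else if k = 1 then {1/3..1/2}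
                 else if k = 2 then {1/2..2/3} else {2/3..1})"
  unfolding cylinder_def
proof (intro antisym subsetI)
  fix x :: real
  assume x: "x \<in> (if k = 0 then {0..1/3} else if k = 1 then {1/3..1/2}
                 else if k = 2 then {1/2..2/3} else {2/3..1})"
  define y where "y = (if k = 0 then 3 * x else if k = 1 then 6 * x - 2
                       else if k = 2 then 4 - 6 * x else 3 * x - 2)"
  have "Smap k y = x" "y \<in> {0..1}"
    using x by (auto simp: y_def Smap_def field_simps split: if_splits)
  then show "x \<in> Smap k ` {0..1}" by force
qed (auto simp: Smap_def)

lemma Smap_borel: "Smap k \<in> borel_measurable borel"
  by (rule borel_measurable_continuous_onI)
     (cases "k = 0"; cases "k = 1"; cases "k = 2"; auto simp: Smap_def intro!: continuous_intros)

lemma Smap_unit_interval: "y \<in> {0..1} \<Longrightarrow> Smap k y \<in> {0..1}"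
  by (auto simp: Smap_def)

lemma Smap_in_other_cylinder:
  assumes "j \<noteq> k" "j < 4" "k < 4" "y \<in> {0..1}" "Smap j y \<in> cylinder k"
  shows "y \<in> {0, 1}"
proof -
  have "j = 0 \<or> j = 1 \<or> j = 2 \<or> j = 3" "k = 0 \<or> k = 1 \<or> k = 2 \<or> k = 3"
    using assms by auto
  then show ?thesis using assms by (elim disjE) (simp_all add: Smap_def cylinder_eq)
qed

lemma contraction_ratio_bounds: "0 < contraction_ratio k" "contraction_ratio k \<le> 1/3"
  by (auto simp: contraction_ratio_def)

lemma radius_growth: "0 < r \<Longrightarrow> 3 * r \<le> r / contraction_ratio k"
  using contraction_ratio_bounds[of k] by (simp add: field_simps)

lemma Smap_vimage_ball:
  assumes "Smap k y = x"
  shows "Smap k -` ball x \<rho> = ball y (\<rho> / contraction_ratio k)"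
  using assms
  by (cases "k = 0"; cases "k = 1"; cases "k = 2")
     (auto simp: Smap_def contraction_ratio_def ball_eq_greaterThanLessThan field_simps)

lemma ball_in_cylinder:
  fixes x \<rho> :: real
  assumes "junctions \<inter> ball x \<rho> = {}"
  obtains k where "k < 4" "ball x \<rho> \<inter> {0..1} \<subseteq> cylinder k"
proof -
  have "\<exists>k<4. {x - \<rho><..<x + \<rho>} \<inter> {0..1} \<subseteq> cylinder k"
  proof (cases "x - \<rho> < x + \<rho>")
    case True
    then consider "x + \<rho> \<le> 1/3" | "1/3 \<le> x - \<rho>" "x + \<rho> \<le> 1/2" | "1/2 \<le> x - \<rho>" "x + \<rho> \<le> 2/3"
      | "2/3 \<le> x - \<rho>"
      using assms by (auto simp: junctions_def ball_eq_greaterThanLessThan)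
    then show ?thesis
    proof cases
      case 1
      show ?thesis by (rule exI[of _ 0]) (use 1 in \<open>auto simp: cylinder_eq\<close>)
    next
      case 2
      show ?thesis by (rule exI[of _ 1]) (use 2 in \<open>auto simp: cylinder_eq\<close>)
    next
      case 3
      show ?thesis by (rule exI[of _ 2]) (use 3 in \<open>auto simp: cylinder_eq\<close>)
    next
      case 4
      show ?thesis by (rule exI[of _ 3]) (use 4 in \<open>auto simp: cylinder_eq\<close>)
    qed
  qed (auto intro: exI[of _ 0])
  then show ?thesis using that by (auto simp: ball_eq_greaterThanLessThan)
qed

(* The weights enter only through p_i > 0 and p 3 = p 0; the latter makes the masses near 0 and
   near 1 scale alike. *)
locale self_similar_measure =
  fixes p :: "nat \<Rightarrow> real" and M :: "real measure"
  assumes sets_M: "sets M = sets borel"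
    and prob_space_M: "prob_space M"
    and null_outside: "emeasure M (- {0..1}) = 0"
    and p_pos: "i < 4 \<Longrightarrow> 0 < p i"
    and p3_eq_p0: "p 3 = p 0"
    and invariant: "A \<in> sets borel \<Longrightarrow>
      emeasure M A = (\<Sum>i<4. ennreal (p i) * emeasure M (Smap i -` A))"
begin

sublocale prob_space M by (rule prob_space_M)

lemma sets_M_iff [simp]: "A \<in> sets M \<longleftrightarrow> A \<in> sets borel"
  using sets_M by simp

lemma space_M: "space M = UNIV"
  using sets_eq_imp_space_eq[OF sets_M] by simp

lemma Smap_vimage_borel [simp]: "A \<in> sets borel \<Longrightarrow> Smap k -` A \<in> sets borel"
  using measurable_sets_borel[OF Smap_borel] by simp

lemma prob_invariant:
  assumes "A \<in> sets borel"
  shows "prob A = (\<Sum>i<4. p i * prob (Smap i -` A))"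
proof -
  have "ennreal (prob A) = (\<Sum>i<4. ennreal (p i) * ennreal (prob (Smap i -` A)))"
    using invariant[OF assms] by (simp add: emeasure_eq_measure)
  also have "\<dots> = (\<Sum>i<4. ennreal (p i * prob (Smap i -` A)))"
    using p_pos by (intro sum.cong) (auto simp: ennreal_mult less_imp_le)
  also have "\<dots> = ennreal (\<Sum>i<4. p i * prob (Smap i -` A))"
    using p_pos by (intro sum_ennreal) (simp add: less_imp_le)
  finally have "ennreal (prob A) = ennreal (\<Sum>i<4. p i * prob (Smap i -` A))" .
  moreover have "0 \<le> (\<Sum>i<4. p i * prob (Smap i -` A))"
    using p_pos by (intro sum_nonneg) (simp add: less_imp_le)
  ultimately show ?thesis by simp
qed

lemma prob_restrict_unit_interval:
  assumes "A \<in> sets borel" shows "prob (A \<inter> {0..1}) = prob A"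
proof -
  have "- {0..1} \<in> null_sets M" using null_outside by (simp add: null_sets_def)
  then have "prob (A - (- {0..1})) = prob A" using assms by (intro measure_Diff_null_set) auto
  then show ?thesis by (simp add: Diff_eq)
qed

lemma prob_unit_interval: "prob {0..1} = 1"
  using prob_restrict_unit_interval[of UNIV] prob_space by (simp add: space_M)

lemma p_sum: "(\<Sum>i<4. p i) = 1"
proof -
  have "prob (Smap i -` {0..1}) = 1" for i
  proof -
    have "{0..1} \<subseteq> Smap i -` {0..1}" using Smap_unit_interval by auto
    then have "1 \<le> prob (Smap i -` {0..1})"
      using finite_measure_mono[of "{0..1}" "Smap i -` {0..1}"] prob_unit_interval by simp
    then show ?thesis using prob_le_1 by (intro antisym) auto
  qed
  then show ?thesis using prob_invariant[of "{0..1}"] prob_unit_interval by simp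
qed

lemma p_less_1: "i < 4 \<Longrightarrow> p i < 1"
  using p_sum p_pos[of 0] p_pos[of 1] p_pos[of 2] p_pos[of 3]
  by (auto simp: numeral_eq_Suc lessThan_Suc less_Suc_eq)

lemma prob_endpoints: "prob {0, 1} = 0"
proof -
  have vimage: "Smap i -` {0, 1} \<inter> {0..1} =
      (if i = 0 then {0} else if i = 1 \<or> i = 2 then {} else {1})" for i
    by (auto simp: Smap_def)
  have "prob (Smap i -` {0, 1}) = prob (Smap i -` {0, 1} \<inter> {0..1})" for i
    by (simp add: prob_restrict_unit_interval)
  then have "prob {0, 1} = p 0 * prob {0} + p 3 * prob {1}"
    using prob_invariant[of "{0, 1}"] by (simp add: vimage numeral_eq_Suc lessThan_Suc)
  also have "\<dots> = p 0 * prob {0, 1}"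
    using finite_measure_Union[of "{0}" "{1}"] by (simp add: p3_eq_p0 distrib_left insert_commute)
  finally have "(1 - p 0) * prob {0, 1} = 0" by (simp add: algebra_simps)
  then show ?thesis using p_less_1[of 0] by simp
qed

lemma prob_in_cylinder:
  assumes "A \<in> sets borel" "A \<inter> {0..1} \<subseteq> cylinder k" "k < 4"
  shows "prob A = p k * prob (Smap k -` A)"
proof -
  let ?A = "A \<inter> {0..1}"
  have other: "prob (Smap j -` ?A) = 0" if "j < 4" "j \<noteq> k" for j
  proof -
    have "prob (Smap j -` ?A) = prob (Smap j -` ?A \<inter> {0..1})"
      using assms(1) by (intro prob_restrict_unit_interval[symmetric] Smap_vimage_borel) auto
    also have "\<dots> \<le> prob {0, 1}"
      using Smap_in_other_cylinder[OF that(2,1) assms(3)] assms(2)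
      by (intro finite_measure_mono) fastforce+
    finally show ?thesis using prob_endpoints measure_nonneg[of M] by (simp add: order_antisym)
  qed
  have "prob (Smap k -` ?A) = prob (Smap k -` ?A \<inter> {0..1})"
    using assms(1) by (intro prob_restrict_unit_interval[symmetric] Smap_vimage_borel) auto
  also have "Smap k -` ?A \<inter> {0..1} = Smap k -` A \<inter> {0..1}"
    using Smap_unit_interval by auto
  also have "prob \<dots> = prob (Smap k -` A)"
    using assms(1) by (simp add: prob_restrict_unit_interval)
  finally have same: "prob (Smap k -` ?A) = prob (Smap k -` A)" .
  have "prob A = prob ?A" using assms(1) by (simp add: prob_restrict_unit_interval)
  also have "\<dots> = (\<Sum>j<4. p j * prob (Smap j -` ?A))" using assms(1) by (simp add: prob_invariant)
  also have "\<dots> = p k * prob (Smap k -` ?A)"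
    using assms(3) other by (subst sum.remove[of _ k]) (auto intro!: sum.neutral)
  finally show ?thesis by (simp only: same)
qed

lemma zoom_into_cylinder:
  assumes "x \<in> {0..1}" "0 < \<rho>" "junctions \<inter> ball x \<rho> = {}"
  obtains k y where "k < 4" "y \<in> {0..1}"
    "\<And>\<rho>'. \<rho>' \<le> \<rho> \<Longrightarrow> prob (ball x \<rho>') = p k * prob (ball y (\<rho>' / contraction_ratio k))"
proof -
  obtain k where k: "k < 4" "ball x \<rho> \<inter> {0..1} \<subseteq> cylinder k"
    using assms(3) by (rule ball_in_cylinder)
  then have "x \<in> cylinder k" using assms(1,2) by auto
  then obtain y where y: "y \<in> {0..1}" "Smap k y = x" by (auto simp: cylinder_def)
  have "prob (ball x \<rho>') = p k * prob (ball y (\<rho>' / contraction_ratio k))" if "\<rho>' \<le> \<rho>" for \<rho>'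
  proof -
    have "ball x \<rho>' \<inter> {0..1} \<subseteq> cylinder k" using k(2) subset_ball[OF that] by blast
    then show ?thesis
      using prob_in_cylinder[of "ball x \<rho>'" k] Smap_vimage_ball[OF y(2)] k(1) by simp
  qed
  with k(1) y(1) that show ?thesis by blast
qed

definition left_mass :: "real \<Rightarrow> real" where
  "left_mass t = prob {0..t}"

definition right_mass :: "real \<Rightarrow> real" where
  "right_mass t = prob {1 - t..1}"

sublocale left: scaling_function left_mass "p 0"
proof
  show "mono left_mass"
    by (auto intro!: monoI finite_measure_mono simp: left_mass_def)
  show "left_mass (t / 3) = p 0 * left_mass t" if "0 \<le> t" "t \<le> 1" for t
  proof -
    have "Smap 0 -` {0..t / 3} = {0..t}" by (auto simp: Smap_def)
    then show ?thesis
      using prob_in_cylinder[of "{0..t / 3}" 0] that by (simp add: left_mass_def cylinder_eq)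
  qed
qed (use p_pos prob_unit_interval in \<open>auto simp: left_mass_def\<close>)

sublocale right: scaling_function right_mass "p 0"
proof
  show "mono right_mass"
    by (auto intro!: monoI finite_measure_mono simp: right_mass_def)
  show "right_mass (t / 3) = p 0 * right_mass t" if "0 \<le> t" "t \<le> 1" for t
  proof -
    have "Smap 3 -` {1 - t / 3..1} = {1 - t..1}" by (auto simp: Smap_def field_simps)
    then show ?thesis
      using prob_in_cylinder[of "{1 - t / 3..1}" 3] that
      by (simp add: right_mass_def cylinder_eq p3_eq_p0)
  qed
qed (use p_pos prob_unit_interval in \<open>auto simp: right_mass_def\<close>)

lemma left_right_comparable:
  assumes "0 < t" "t \<le> 1"
  shows "p 0 * left_mass t \<le> right_mass t" "p 0 * right_mass t \<le> left_mass t"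
proof -
  have scale_3: "F s = p 0 * F (3 * s)"
    if "scaling_function F (p 0)" "0 < s" "s < 1/3" for F s
    using scaling_function.scale[OF that(1), of "3 * s"] that(2,3) by simp
  have top: "p 0 * F s \<le> F' s"
    if "scaling_function F (p 0)" "scaling_function F' (p 0)" "1/3 \<le> s" for F F' s
  proof -
    have "p 0 * F s \<le> p 0" using scaling_function.le_1[OF that(1)] p_pos[of 0] by simp
    also have "\<dots> = F' (1/3)" using scaling_function.at_third[OF that(2)] by simp
    also have "\<dots> \<le> F' s" using scaling_function.mono[OF that(2)] that(3) by (simp add: monoD)
    finally show ?thesis .
  qed
  note axioms = left.scaling_function_axioms right.scaling_function_axioms
  show "p 0 * left_mass t \<le> right_mass t"
    by (rule scale_invariant_comparison[where q = "p 0" and f = right_mass and g = left_mass,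
          OF _ scale_3[OF axioms(2)] scale_3[OF axioms(1)] top[OF axioms]])
       (use assms p_pos[of 0] in auto)
  show "p 0 * right_mass t \<le> left_mass t"
    by (rule scale_invariant_comparison[where q = "p 0" and f = left_mass and g = right_mass,
          OF _ scale_3[OF axioms(1)] scale_3[OF axioms(2)] top[OF axioms(2,1)]])
       (use assms p_pos[of 0] in auto)
qed

lemma prob_near_junctions:
  assumes "0 \<le> u" "u \<le> 1/6"
  shows "prob {1/3 - u..1/3} = p 0 * right_mass (3 * u)" "prob {1/3..1/3 + u} = p 1 * left_mass (6 * u)"
    "prob {1/2 - u..1/2} = p 1 * right_mass (6 * u)" "prob {1/2..1/2 + u} = p 2 * right_mass (6 * u)"
    "prob {2/3 - u..2/3} = p 2 * left_mass (6 * u)" "prob {2/3..2/3 + u} = p 0 * left_mass (3 * u)"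
proof -
  have *: "prob A = p k * prob B"
    if "k < 4" "A \<in> sets borel" "A \<subseteq> cylinder k" "Smap k -` A = B" for k A B
    using prob_in_cylinder[of A k] that by auto
  show "prob {1/3 - u..1/3} = p 0 * right_mass (3 * u)"
    unfolding right_mass_def by (rule *) (use assms in \<open>auto simp: cylinder_eq Smap_def field_simps\<close>)
  show "prob {1/3..1/3 + u} = p 1 * left_mass (6 * u)"
    unfolding left_mass_def by (rule *) (use assms in \<open>auto simp: cylinder_eq Smap_def field_simps\<close>)
  show "prob {1/2 - u..1/2} = p 1 * right_mass (6 * u)"
    unfolding right_mass_def by (rule *) (use assms in \<open>auto simp: cylinder_eq Smap_def field_simps\<close>)
  show "prob {1/2..1/2 + u} = p 2 * right_mass (6 * u)"
    unfolding right_mass_def by (rule *) (use assms in \<open>auto simp: cylinder_eq Smap_def field_simps\<close>)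
  show "prob {2/3 - u..2/3} = p 2 * left_mass (6 * u)"
    unfolding left_mass_def by (rule *) (use assms in \<open>auto simp: cylinder_eq Smap_def field_simps\<close>)
  show "prob {2/3..2/3 + u} = p 0 * left_mass (3 * u)"
    unfolding left_mass_def p3_eq_p0[symmetric]
    by (rule *) (use assms in \<open>auto simp: cylinder_eq Smap_def field_simps\<close>)
qed

lemma prob_junction_right_pos:
  assumes "j \<in> junctions" "0 < u" "u \<le> 1/6"
  shows "0 < prob {j..j + u}"
proof -
  have "0 < left_mass (3 * u)" "0 < left_mass (6 * u)" "0 < right_mass (6 * u)"
    using assms(2) by (simp_all add: left.pos right.pos)
  moreover have "j = 1/3 \<or> j = 1/2 \<or> j = 2/3" using assms(1) by (simp add: junctions_def)
  ultimately show ?thesis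
    using prob_near_junctions[OF less_imp_le assms(3)] assms(2) p_pos[of 0] p_pos[of 1] p_pos[of 2]
    by (elim disjE) (hypsubst, simp)+
qed

lemma prob_ball_pos:
  assumes "x \<in> {0..1}" "0 < r"
  shows "0 < prob (ball x r)"
proof -
  have "\<forall>x\<in>{0..1}. 0 < prob (ball x r)"
  proof (rule scale_induct[where P = "\<lambda>r. \<forall>x\<in>{0..1}. 0 < prob (ball x r)" and q = 3 and a = 2])
    fix r :: real
    assume "2 \<le> r"
    have "prob {0..1} \<le> prob (ball x r)" if "x \<in> {0..1}" for x :: real
      using that \<open>2 \<le> r\<close> by (intro finite_measure_mono) (auto simp: dist_real_def)
    then show "\<forall>x\<in>{0..1}. 0 < prob (ball x r)" using prob_unit_interval by fastforce
  next
    fix r :: real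
    assume r: "0 < r" and IH: "\<And>s. 3 * r \<le> s \<Longrightarrow> \<forall>x\<in>{0..1}. 0 < prob (ball x s)"
    show "\<forall>x\<in>{0..1}. 0 < prob (ball x r)"
    proof
      fix x :: real
      assume x: "x \<in> {0..1}"
      show "0 < prob (ball x r)"
      proof (cases "junctions \<inter> ball x r = {}")
        case True
        with x r obtain k y where "k < 4" "y \<in> {0..1}"
          "prob (ball x r) = p k * prob (ball y (r / contraction_ratio k))"
          by (rule zoom_into_cylinder) blast
        then show ?thesis using IH[OF radius_growth[OF r]] p_pos by auto
      next
        case False
        then obtain j where j: "j \<in> junctions" "x - r < j" "j < x + r"
          by (auto simp: ball_eq_greaterThanLessThan)
        define u where "u = min (1/6) ((x + r - j) / 2)"
        have u: "0 < u" "u \<le> 1/6" "u \<le> (x + r - j) / 2" using j by (auto simp: u_def min_def)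
        have "0 < prob {j..j + u}" using prob_junction_right_pos[OF j(1) u(1,2)] .
        also have "\<dots> \<le> prob (ball x r)"
          using j u by (intro finite_measure_mono) (auto simp: ball_eq_greaterThanLessThan)
        finally show ?thesis .
      qed
    qed
  qed (use assms in auto)
  then show ?thesis using assms(1) by blast
qed

lemma uniform_ball_lower_bound:
  assumes "0 < \<delta>"
  shows "\<exists>c>0. \<forall>x\<in>{0..1}. c \<le> prob (ball x \<delta>)"
proof -
  have cover: "{0..1} \<subseteq> (\<Union>c\<in>{0..1::real}. ball c (\<delta> / 2))"
  proof
    fix x :: real
    assume "x \<in> {0..1}"
    then show "x \<in> (\<Union>c\<in>{0..1}. ball c (\<delta> / 2))" using assms by (intro UN_I[of x]) auto
  qed
  obtain C :: "real set"
    where C: "C \<subseteq> {0..1}" "finite C" "{0..1} \<subseteq> (\<Union>c\<in>C. ball c (\<delta> / 2))"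
  proof (rule compactE_image[where S = "{0..1::real}" and C = "{0..1}" and f = "\<lambda>c. ball c (\<delta> / 2)"])
    fix C' :: "real set"
    assume "C' \<subseteq> {0..1}" "finite C'" "{0..1} \<subseteq> (\<Union>c\<in>C'. ball c (\<delta> / 2))"
    then show thesis by (rule that)
  qed (simp_all add: cover)
  have "0 \<in> (\<Union>c\<in>C. ball c (\<delta> / 2))" using C(3) by (rule subsetD) simp
  then have "C \<noteq> {}" by auto
  define m where "m = Min ((\<lambda>c. prob (ball c (\<delta> / 2))) ` C)"
  have "0 < m"
    unfolding m_def using C(1,2) \<open>C \<noteq> {}\<close> assms
    by (subst Min_gr_iff) (auto intro!: prob_ball_pos)
  moreover have "m \<le> prob (ball x \<delta>)" if x: "x \<in> {0..1}" for x :: real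
  proof -
    obtain c where c: "c \<in> C" "x \<in> ball c (\<delta> / 2)" using C(3) x by auto
    have "m \<le> prob (ball c (\<delta> / 2))" using C(2) c(1) by (simp add: m_def)
    also have "\<dots> \<le> prob (ball x \<delta>)"
      using c(2) by (intro finite_measure_mono) (auto simp: ball_eq_greaterThanLessThan)
    finally show ?thesis .
  qed
  ultimately show ?thesis by blast
qed

lemma left_window_lower_bound:
  assumes c: "0 \<le> c" "\<And>x. x \<in> {0..1} \<Longrightarrow> c \<le> prob (ball x (1/18))"
    and t: "0 < t" "t \<le> 1"
  shows "c * left_mass t \<le> prob {2 * t / 3<..<t}"
proof (rule scale_invariant_comparison[where q = "p 0" and f = "\<lambda>t. prob {2 * t / 3<..<t}"])
  show "prob {2 * s / 3<..<s} = p 0 * prob {2 * (3 * s) / 3<..<3 * s}" if "0 < s" "s < 1/3" for s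
  proof -
    have "Smap 0 -` {2 * s / 3<..<s} = {2 * (3 * s) / 3<..<3 * s}" by (auto simp: Smap_def)
    then show ?thesis
      using prob_in_cylinder[of "{2 * s / 3<..<s}" 0] that by (simp add: cylinder_eq subset_eq)
  qed
  show "left_mass s = p 0 * left_mass (3 * s)" if "0 < s" "s < 1/3" for s
    using left.scale[of "3 * s"] that by simp
  show "c * left_mass s \<le> prob {2 * s / 3<..<s}" if "1/3 \<le> s" "s \<le> 1" for s
  proof -
    have "c * left_mass s \<le> c" using c(1) left.le_1 by (simp add: mult_left_le)
    also have "\<dots> \<le> prob (ball (5 * s / 6) (1/18))" using c(2) that by simp
    also have "\<dots> \<le> prob {2 * s / 3<..<s}"
      using that by (intro finite_measure_mono) (auto simp: ball_eq_greaterThanLessThan)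
    finally show ?thesis .
  qed
qed (use t p_pos[of 0] in auto)

lemma right_window_lower_bound:
  assumes c: "0 \<le> c" "\<And>x. x \<in> {0..1} \<Longrightarrow> c \<le> prob (ball x (1/18))"
    and t: "0 < t" "t \<le> 1"
  shows "c * right_mass t \<le> prob {1 - t<..<1 - 2 * t / 3}"
proof (rule scale_invariant_comparison[where q = "p 0" and f = "\<lambda>t. prob {1 - t<..<1 - 2 * t / 3}"])
  show "prob {1 - s<..<1 - 2 * s / 3} = p 0 * prob {1 - 3 * s<..<1 - 2 * (3 * s) / 3}"
    if "0 < s" "s < 1/3" for s
  proof -
    have "Smap 3 -` {1 - s<..<1 - 2 * s / 3} = {1 - 3 * s<..<1 - 2 * (3 * s) / 3}"
      by (auto simp: Smap_def field_simps)
    then show ?thesis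
      using prob_in_cylinder[of "{1 - s<..<1 - 2 * s / 3}" 3] that
      by (simp add: cylinder_eq subset_eq p3_eq_p0)
  qed
  show "right_mass s = p 0 * right_mass (3 * s)" if "0 < s" "s < 1/3" for s
    using right.scale[of "3 * s"] that by simp
  show "c * right_mass s \<le> prob {1 - s<..<1 - 2 * s / 3}" if "1/3 \<le> s" "s \<le> 1" for s
  proof -
    have "c * right_mass s \<le> c" using c(1) right.le_1 by (simp add: mult_left_le)
    also have "\<dots> \<le> prob (ball (1 - 5 * s / 6) (1/18))" using c(2) that by simp
    also have "\<dots> \<le> prob {1 - s<..<1 - 2 * s / 3}"
      using that by (intro finite_measure_mono) (auto simp: ball_eq_greaterThanLessThan)
    finally show ?thesis .
  qed
qed (use t p_pos[of 0] in auto)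

lemma boundary_interval_lower_bound:
  assumes c: "0 \<le> c" "\<And>x. x \<in> {0..1} \<Longrightarrow> c \<le> prob (ball x (1/18))"
    and l: "0 < l" "0 \<le> a" "a + l \<le> 1" and near: "a \<le> 2 * l \<or> 1 - (a + l) \<le> 2 * l"
  shows "c * p 0 * left_mass l \<le> prob {a<..<a + l}"
  using near
proof
  assume "a \<le> 2 * l"
  have "p 0 * left_mass l \<le> left_mass l"
    using p_pos[of 0] p_less_1[of 0] by (intro mult_left_le_one_le) (auto simp: left_mass_def)
  then have "c * p 0 * left_mass l \<le> c * left_mass l"
    using mult_left_mono c(1) by (simp add: mult.assoc)
  also have "\<dots> \<le> c * left_mass (a + l)"
    using c(1) l by (intro mult_left_mono monoD[OF left.mono]) auto
  also have "\<dots> \<le> prob {2 * (a + l) / 3<..<a + l}"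
    using left_window_lower_bound[OF c, of "a + l"] l by simp
  also have "\<dots> \<le> prob {a<..<a + l}"
    using \<open>a \<le> 2 * l\<close> by (intro finite_measure_mono) auto
  finally show ?thesis .
next
  assume "1 - (a + l) \<le> 2 * l"
  have "c * p 0 * left_mass l \<le> c * right_mass l"
    using c(1) left_right_comparable(1)[of l] l by (simp add: mult.assoc mult_left_mono)
  also have "\<dots> \<le> c * right_mass (1 - a)"
    using c(1) l by (intro mult_left_mono monoD[OF right.mono]) auto
  also have "\<dots> \<le> prob {1 - (1 - a)<..<1 - 2 * (1 - a) / 3}"
    using right_window_lower_bound[OF c, of "1 - a"] l by simp
  also have "\<dots> \<le> prob {a<..<a + l}"
    using \<open>1 - (a + l) \<le> 2 * l\<close> by (intro finite_measure_mono) (auto simp: field_simps)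
  finally show ?thesis .
qed

definition p_min :: real where
  "p_min = Min (p ` {..<4})"

lemma p_min_bounds: "0 < p_min" "k < 4 \<Longrightarrow> p_min \<le> p k"
  unfolding p_min_def using p_pos by (subst Min_gr_iff) (auto simp: lessThan_empty_iff)

lemma cylinder_piece_lower_bound:
  assumes c: "0 \<le> c" "\<And>x. x \<in> {0..1} \<Longrightarrow> c \<le> prob (ball x (1/18))"
    and piece: "k < 4" "{u<..<v} \<subseteq> cylinder k" "{u<..<v} \<subseteq> ball x r"
      "Smap k -` {u<..<v} = {a<..<a + l}"
    and scale: "0 < r" "r \<le> l" "0 \<le> a" "a + l \<le> 1" "a \<le> 2 * l \<or> 1 - (a + l) \<le> 2 * l"
  shows "c * p 0 * p_min * left_mass r \<le> prob (ball x r)"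
proof -
  have "p_min * left_mass r \<le> p k * left_mass l"
    using piece(1) scale(1,2) p_min_bounds left.pos[of r] monoD[OF left.mono, of r l] p_pos[of k]
    by (intro mult_mono) auto
  then have "c * p 0 * (p_min * left_mass r) \<le> c * p 0 * (p k * left_mass l)"
    using c(1) p_pos[of 0] by (intro mult_left_mono) auto
  then have "c * p 0 * p_min * left_mass r \<le> p k * (c * p 0 * left_mass l)"
    by (simp add: algebra_simps)
  also have "\<dots> \<le> p k * prob {a<..<a + l}"
    using boundary_interval_lower_bound[OF c, of l a] scale p_pos[OF piece(1)]
    by (simp add: mult_left_mono)
  also have "\<dots> = prob {u<..<v}"
    using prob_in_cylinder[of "{u<..<v}" k] piece(1,2,4) by (simp add: le_infI1)
  also have "\<dots> \<le> prob (ball x r)" using piece(3) by (intro finite_measure_mono) auto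
  finally show ?thesis .
qed

lemma junction_lower_bound:
  assumes c: "0 \<le> c" "\<And>x. x \<in> {0..1} \<Longrightarrow> c \<le> prob (ball x (1/18))"
    and j: "j \<in> junctions" and r: "0 < r" "r < 1/24" "\<bar>x - j\<bar> < 2 * r"
  shows "c * p 0 * p_min * left_mass r \<le> prob (ball x r)"
proof -
  note simps = cylinder_eq Smap_def ball_eq_greaterThanLessThan field_simps
  \<comment> \<open>The half of ball x r on the side of j containing x lies in one cylinder, and its
    preimage is an interval of length 3r or 6r within twice its length of 0 or 1.\<close>
  consider "j = 1/3" "j \<le> x" | "j = 1/3" "x < j" | "j = 1/2" "j \<le> x" | "j = 1/2" "x < j"
    | "j = 2/3" "j \<le> x" | "j = 2/3" "x < j"
    using j unfolding junctions_def by (metis empty_iff insert_iff not_le)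
  then show ?thesis
  proof cases
    case 1
    show ?thesis
      by (rule cylinder_piece_lower_bound[OF c, where k = 1 and u = x and v = "x + r"
            and a = "6 * x - 2" and l = "6 * r"]) (use 1 r in \<open>auto simp: simps\<close>)
  next
    case 2
    show ?thesis
      by (rule cylinder_piece_lower_bound[OF c, where k = 0 and u = "x - r" and v = x
            and a = "3 * x - 3 * r" and l = "3 * r"]) (use 2 r in \<open>auto simp: simps\<close>)
  next
    case 3
    show ?thesis
      by (rule cylinder_piece_lower_bound[OF c, where k = 2 and u = x and v = "x + r"
            and a = "4 - 6 * x - 6 * r" and l = "6 * r"]) (use 3 r in \<open>auto simp: simps\<close>)
  next
    case 4
    show ?thesis
      by (rule cylinder_piece_lower_bound[OF c, where k = 1 and u = "x - r" and v = x
            and a = "6 * x - 6 * r - 2" and l = "6 * r"]) (use 4 r in \<open>auto simp: simps\<close>)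
  next
    case 5
    show ?thesis
      by (rule cylinder_piece_lower_bound[OF c, where k = 3 and u = x and v = "x + r"
            and a = "3 * x - 2" and l = "3 * r"]) (use 5 r in \<open>auto simp: simps\<close>)
  next
    case 6
    show ?thesis
      by (rule cylinder_piece_lower_bound[OF c, where k = 2 and u = "x - r" and v = x
            and a = "4 - 6 * x" and l = "6 * r"]) (use 6 r in \<open>auto simp: simps\<close>)
  qed
qed

lemma prob_junction_sides_le:
  assumes "j \<in> junctions" "0 \<le> u" "u \<le> 1/6"
  shows "prob {j - u..j} \<le> max (left_mass (6 * u)) (right_mass (6 * u))"
    and "prob {j..j + u} \<le> max (left_mass (6 * u)) (right_mass (6 * u))"
proof -
  have weighted: "p k * F v \<le> max (left_mass (6 * u)) (right_mass (6 * u))"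
    if "k < 4" "F = left_mass \<or> F = right_mass" "0 \<le> v" "v \<le> 6 * u" for k F v
  proof -
    have "0 \<le> F v" using that(2) by (auto simp: left_mass_def right_mass_def)
    then have "p k * F v \<le> F v"
      using p_pos[OF that(1)] p_less_1[OF that(1)] by (intro mult_left_le_one_le) auto
    also have "\<dots> \<le> F (6 * u)"
      using that(2,4) monoD[OF left.mono] monoD[OF right.mono] by auto
    finally show ?thesis using that(2) by auto
  qed
  have "j = 1/3 \<or> j = 1/2 \<or> j = 2/3" using assms(1) by (simp add: junctions_def)
  then show "prob {j - u..j} \<le> max (left_mass (6 * u)) (right_mass (6 * u))"
    and "prob {j..j + u} \<le> max (left_mass (6 * u)) (right_mass (6 * u))"
    using prob_near_junctions[OF assms(2,3)] weighted assms(2) by (elim disjE; hypsubst; simp)+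
qed

lemma mass_growth_bound:
  assumes "0 < r" "r \<le> 1"
  shows "p 0 ^ 4 * max (left_mass (27 * r)) (right_mass (27 * r)) \<le> left_mass r"
proof -
  have p0: "0 < p 0" "p 0 \<le> 1" using p_pos[of 0] p_less_1[of 0] by auto
  have "p 0 ^ 4 * left_mass (27 * r) \<le> p 0 ^ 3 * left_mass (27 * r)"
    using p0 by (intro mult_right_mono power_decreasing) (auto simp: left_mass_def)
  also have "\<dots> \<le> left_mass r" using left.growth[of r 3] assms by simp
  finally have left_bound: "p 0 ^ 4 * left_mass (27 * r) \<le> left_mass r" .
  have "p 0 ^ 4 * right_mass (27 * r) = p 0 * (p 0 ^ 3 * right_mass (27 * r))"
    by (simp add: eval_nat_numeral)
  also have "\<dots> \<le> p 0 * right_mass r"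
    using right.growth[of r 3] assms p0 by (simp add: mult_left_mono)
  also have "\<dots> \<le> left_mass r" using left_right_comparable(2) assms by simp
  finally show ?thesis using left_bound by (simp add: max_def)
qed

lemma junction_upper_bound:
  assumes "j \<in> junctions" "0 < r" "r < 1/24" "\<bar>x - j\<bar> < 2 * r"
  shows "p 0 ^ 4 * prob (ball x (2 * r)) \<le> 2 * left_mass r"
proof -
  let ?m = "max (left_mass (27 * r)) (right_mass (27 * r))"
  have "max (left_mass (6 * (4 * r))) (right_mass (6 * (4 * r))) \<le> ?m"
    using assms(2) monoD[OF left.mono, of "24 * r" "27 * r"] monoD[OF right.mono, of "24 * r" "27 * r"]
    by auto
  then have sides: "prob {j - 4 * r..j} \<le> ?m" "prob {j..j + 4 * r} \<le> ?m"
    using prob_junction_sides_le[OF assms(1), of "4 * r"] assms(2,3) by auto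
  have "ball x (2 * r) \<subseteq> {j - 4 * r..j} \<union> {j..j + 4 * r}"
    using assms(4) by (auto simp: ball_eq_greaterThanLessThan)
  then have "prob (ball x (2 * r)) \<le> prob ({j - 4 * r..j} \<union> {j..j + 4 * r})"
    by (intro finite_measure_mono) auto
  also have "\<dots> \<le> prob {j - 4 * r..j} + prob {j..j + 4 * r}"
    by (rule measure_Un_le) auto
  finally have "prob (ball x (2 * r)) \<le> 2 * ?m" using sides by linarith
  then have "p 0 ^ 4 * prob (ball x (2 * r)) \<le> 2 * (p 0 ^ 4 * ?m)"
    using p_pos[of 0] mult_left_mono[of _ _ "p 0 ^ 4"] by (simp add: algebra_simps)
  also have "\<dots> \<le> 2 * left_mass r" using mass_growth_bound[of r] assms(2,3) by simp
  finally show ?thesis .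
qed

lemma junction_doubling:
  "\<exists>C. \<forall>j\<in>junctions. \<forall>x r. 0 < r \<longrightarrow> r < 1/24 \<longrightarrow> \<bar>x - j\<bar> < 2 * r \<longrightarrow>
     prob (ball x (2 * r)) \<le> C * prob (ball x r)"
proof -
  obtain c where c: "0 < c" "\<And>x. x \<in> {0..1} \<Longrightarrow> c \<le> prob (ball x (1/18))"
    using uniform_ball_lower_bound[of "1/18"] by auto
  define \<kappa> where "\<kappa> = c * p 0 * p_min"
  have \<kappa>: "0 < \<kappa>" using c(1) p_pos[of 0] p_min_bounds(1) by (simp add: \<kappa>_def)
  have p04: "0 < p 0 ^ 4" using p_pos[of 0] by simp
  have "prob (ball x (2 * r)) \<le> 2 / (p 0 ^ 4 * \<kappa>) * prob (ball x r)"
    if "j \<in> junctions" "0 < r" "r < 1/24" "\<bar>x - j\<bar> < 2 * r" for j x r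
  proof -
    have "prob (ball x (2 * r)) \<le> 2 * left_mass r / p 0 ^ 4"
      using junction_upper_bound[OF that] p04 by (simp add: field_simps)
    also have "\<dots> = 2 / (p 0 ^ 4 * \<kappa>) * (\<kappa> * left_mass r)" using \<kappa> by simp
    also have "\<dots> \<le> 2 / (p 0 ^ 4 * \<kappa>) * prob (ball x r)"
      using junction_lower_bound[OF less_imp_le[OF c(1)] c(2) that] \<kappa> p04
      by (intro mult_left_mono) (auto simp: \<kappa>_def)
    finally show ?thesis .
  qed
  then show ?thesis by blast
qed

lemma large_scale_doubling:
  assumes "0 < \<delta>"
  shows "\<exists>C\<ge>1. \<forall>x\<in>{0..1}. \<forall>r\<ge>\<delta>. prob (ball x (2 * r)) \<le> C * prob (ball x r)"
proof -
  obtain c where c: "0 < c" "\<And>x. x \<in> {0..1} \<Longrightarrow> c \<le> prob (ball x \<delta>)"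
    using uniform_ball_lower_bound[OF assms] by auto
  have "c \<le> 1" using c(2)[of 0] prob_le_1 by (meson atLeastAtMost_iff order.trans zero_le_one order_refl)
  have "prob (ball x (2 * r)) \<le> 1 / c * prob (ball x r)" if "x \<in> {0..1}" "\<delta> \<le> r" for x r
  proof -
    have "prob (ball x (2 * r)) \<le> 1 / c * c" using c(1) by simp
    also have "\<dots> \<le> 1 / c * prob (ball x \<delta>)" using c that(1) by (intro mult_left_mono) auto
    also have "\<dots> \<le> 1 / c * prob (ball x r)"
      using c(1) that(2) by (intro mult_left_mono finite_measure_mono subset_ball) auto
    finally show ?thesis .
  qed
  moreover have "1 \<le> 1 / c" using c(1) \<open>c \<le> 1\<close> by simp
  ultimately show ?thesis by blast
qed

lemma doubling_away_from_junctions: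
  assumes x: "x \<in> {0..1}" and r: "0 < r" and away: "junctions \<inter> ball x (2 * r) = {}"
    and larger: "\<And>y s. y \<in> {0..1} \<Longrightarrow> 3 * r \<le> s \<Longrightarrow> prob (ball y (2 * s)) \<le> C * prob (ball y s)"
  shows "prob (ball x (2 * r)) \<le> C * prob (ball x r)"
proof -
  obtain k y where k: "k < 4" and y: "y \<in> {0..1}"
    and zoom: "\<And>\<rho>. \<rho> \<le> 2 * r \<Longrightarrow> prob (ball x \<rho>) = p k * prob (ball y (\<rho> / contraction_ratio k))"
    using zoom_into_cylinder[OF x _ away] r by auto
  define s where "s = r / contraction_ratio k"
  have "prob (ball x (2 * r)) = p k * prob (ball y (2 * s))" using zoom[of "2 * r"] by (simp add: s_def)
  also have "\<dots> \<le> p k * (C * prob (ball y s))"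
    using larger[OF y radius_growth[OF r]] p_pos[OF k] by (intro mult_left_mono) (auto simp: s_def)
  also have "\<dots> = C * prob (ball x r)" using zoom[of r] r by (simp add: s_def)
  finally show ?thesis .
qed

theorem doubling:
  "\<exists>C\<ge>1. \<forall>x\<in>{0..1}. \<forall>r>0. prob (ball x (2 * r)) \<le> C * prob (ball x r)"
proof -
  obtain C\<^sub>L where C\<^sub>L: "1 \<le> C\<^sub>L"
    and large: "\<And>x r. x \<in> {0..1} \<Longrightarrow> 1/24 \<le> r \<Longrightarrow> prob (ball x (2 * r)) \<le> C\<^sub>L * prob (ball x r)"
    using large_scale_doubling[of "1/24"] by auto
  obtain C\<^sub>J where near: "\<And>j x r. j \<in> junctions \<Longrightarrow> 0 < r \<Longrightarrow> r < 1/24 \<Longrightarrow> \<bar>x - j\<bar> < 2 * r \<Longrightarrow>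
      prob (ball x (2 * r)) \<le> C\<^sub>J * prob (ball x r)"
    using junction_doubling by blast
  define C where "C = max C\<^sub>L C\<^sub>J"
  let ?doubling = "\<lambda>r. \<forall>x\<in>{0..1}. prob (ball x (2 * r)) \<le> C * prob (ball x r)"
  have "?doubling r" if "0 < r" for r
  proof (rule scale_induct[where P = ?doubling and q = 3 and a = "1/24"])
    fix r :: real
    assume "1/24 \<le> r"
    then show "?doubling r"
      using large C\<^sub>L order_trans[OF _ mult_right_mono[of C\<^sub>L C]] by (fastforce simp: C_def)
  next
    fix r :: real
    assume r: "0 < r" "r < 1/24" and IH: "\<And>s. 3 * r \<le> s \<Longrightarrow> ?doubling s"
    have "prob (ball x (2 * r)) \<le> C * prob (ball x r)" if x: "x \<in> {0..1}" for x
    proof (cases "junctions \<inter> ball x (2 * r) = {}")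
      case True
      then show ?thesis using doubling_away_from_junctions[OF x r(1)] IH by blast
    next
      case False
      then obtain j where "j \<in> junctions" "\<bar>x - j\<bar> < 2 * r" by (auto simp: dist_real_def)
      then have "prob (ball x (2 * r)) \<le> C\<^sub>J * prob (ball x r)" using near r by blast
      also have "\<dots> \<le> C * prob (ball x r)" by (intro mult_right_mono) (auto simp: C_def)
      finally show ?thesis .
    qed
    then show "?doubling r" by blast
  qed (use that in auto)
  then show ?thesis using C\<^sub>L by (intro exI[of _ C]) (auto simp: C_def)
qed

end

theorem lemma4p1:
  fixes lam :: real and M :: "real measure"
  assumes "lam > 1/6"
    and "is_mu_lambda lam M"
  shows "\<exists>C\<ge>1. \<forall>x\<in>{0..1}. \<forall>r>0.
           measure M (ball x (2*r)) \<le> C * measure M (ball x r)"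
proof -
  have "self_similar_measure (pw lam) M"
  proof (rule self_similar_measure.intro)
    show "0 < pw lam i" for i using assms(1) by (simp add: pw_def)
    show "pw lam 3 = pw lam 0" by (simp add: pw_def)
  qed (use assms(2) in \<open>simp_all add: is_mu_lambda_def\<close>)
  then show ?thesis by (rule self_similar_measure.doubling)
qed

end
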